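(* Let $k$ be a positive integer and let $a/b$ be a vertex of $\mathcal F_k$ with $|a|+|b|>k$. Then every neighbor $x/y$ of $a/b$ in $\mathcal F_k$ is comparable to $a/b$, i.e. $a/b\prec x/y$ or $x/y\prec a/b$.
   Context: The vertex set $V$ consists of all reduced fractions $p/q$ with $p,q\in\mathbb Z$, $\gcd(p,q)=1$, together with $1/0$; here $p/q$ and $(-p)/(-q)$ denote the same vertex. For vertices define $d(p/q,a/b)=|pb-qa|$. The graph $\mathcal F_k$ has vertex set $V$, with an edge between $p/q$ and $a/b$ exactly when $d(p/q,a/b)=k$. Write $a/b\prec p/q$ when $a/b$ and $p/q$ are adjacent in $\mathcal F_k$ and $|a|\le|p|$ and $|b|\le|q|$. *)

theory Defs
  imports Main
begin

text \<open>A vertex p/q is represented by an integer pair (p,q) with gcd p q = 1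
  (this includes 1/0 as (1,0) or (-1,0)). The pairs (p,q) and (-p,-q) denote the
  same vertex; all notions below are invariant under this sign change.\<close>

definition vertex :: "int \<times> int \<Rightarrow> bool" where
  "vertex v \<longleftrightarrow> gcd (fst v) (snd v) = 1"

definition fdist :: "int \<times> int \<Rightarrow> int \<times> int \<Rightarrow> int" where
  "fdist v w = \<bar>fst v * snd w - snd v * fst w\<bar>"

definition adjF :: "int \<Rightarrow> int \<times> int \<Rightarrow> int \<times> int \<Rightarrow> bool" where
  "adjF k v w \<longleftrightarrow> vertex v \<and> vertex w \<and> fdist v w = k"

definition precF :: "int \<Rightarrow> int \<times> int \<Rightarrow> int \<times> int \<Rightarrow> bool" where
  "precF k w v \<longleftrightarrow> adjF k w v \<and> \<bar>fst w\<bar> \<le> \<bar>fst v\<bar> \<and> \<bar>snd w\<bar> \<le> \<bar>snd v\<bar>"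

end

theory Submission
  imports Defs
begin

text \<open>If neither of two pairs dominates the other coordinatewise, one of them is strictly larger
  in one coordinate and strictly smaller in the other, and then the determinant is at least the
  sum of the absolute coordinates of the first pair. So for a vertex with
  \<open>\<bar>a\<bar> + \<bar>b\<bar> > k\<close> no neighbour in \<open>F\<^sub>k\<close> can be incomparable.\<close>

lemma fdist_commute: "fdist v w = fdist w v"
  by (simp add: fdist_def abs_minus_commute mult.commute)

lemma adjF_sym: "adjF k v w \<longleftrightarrow> adjF k w v"
  by (auto simp: adjF_def fdist_commute)

lemma abs_det_ge_of_crossing:
  fixes a b x y :: int
  assumes "\<bar>a\<bar> < \<bar>x\<bar>" and "\<bar>y\<bar> < \<bar>b\<bar>"
  shows "\<bar>a\<bar> + \<bar>b\<bar> \<le> \<bar>a * y - b * x\<bar>"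
proof -
  have "\<bar>b\<bar> * (\<bar>a\<bar> + 1) \<le> \<bar>b\<bar> * \<bar>x\<bar>"
    using assms(1) by (simp add: mult_left_mono)
  moreover have "\<bar>a\<bar> * \<bar>y\<bar> \<le> \<bar>a\<bar> * (\<bar>b\<bar> - 1)"
    using assms(2) by (simp add: mult_left_mono)
  moreover have "\<bar>b\<bar> * \<bar>x\<bar> - \<bar>a\<bar> * \<bar>y\<bar> \<le> \<bar>a * y - b * x\<bar>"
    by (metis abs_minus_commute abs_mult abs_triangle_ineq2)
  ultimately show ?thesis
    by (simp add: algebra_simps)
qed

lemma fdist_ge_if_incomparable:
  fixes a b x y :: int
  assumes "\<not> (\<bar>a\<bar> \<le> \<bar>x\<bar> \<and> \<bar>b\<bar> \<le> \<bar>y\<bar>)" and "\<not> (\<bar>x\<bar> \<le> \<bar>a\<bar> \<and> \<bar>y\<bar> \<le> \<bar>b\<bar>)"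
  shows "\<bar>a\<bar> + \<bar>b\<bar> \<le> fdist (a, b) (x, y)"
proof -
  consider "\<bar>a\<bar> < \<bar>x\<bar>" "\<bar>y\<bar> < \<bar>b\<bar>" | "\<bar>b\<bar> < \<bar>y\<bar>" "\<bar>x\<bar> < \<bar>a\<bar>"
    using assms by linarith
  then show ?thesis
  proof cases
    case 1
    then show ?thesis
      using abs_det_ge_of_crossing by (simp add: fdist_def)
  next
    case 2
    then have "\<bar>b\<bar> + \<bar>a\<bar> \<le> \<bar>b * x - a * y\<bar>"
      by (rule abs_det_ge_of_crossing)
    then show ?thesis
      by (simp add: fdist_def abs_minus_commute)
  qed
qed

theorem lemma4p5:
  fixes k a b x y :: int
  assumes "k > 0"
    and "vertex (a, b)"
    and "\<bar>a\<bar> + \<bar>b\<bar> > k"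
    and "adjF k (a, b) (x, y)"
  shows "precF k (a, b) (x, y) \<or> precF k (x, y) (a, b)"
proof (rule ccontr)
  assume "\<not> ?thesis"
  then have "\<not> (\<bar>a\<bar> \<le> \<bar>x\<bar> \<and> \<bar>b\<bar> \<le> \<bar>y\<bar>)" "\<not> (\<bar>x\<bar> \<le> \<bar>a\<bar> \<and> \<bar>y\<bar> \<le> \<bar>b\<bar>)"
    using assms(4) adjF_sym by (auto simp: precF_def)
  then have "\<bar>a\<bar> + \<bar>b\<bar> \<le> fdist (a, b) (x, y)"
    by (rule fdist_ge_if_incomparable)
  moreover have "fdist (a, b) (x, y) = k"
    using assms(4) by (simp add: adjF_def)
  ultimately show False
    using assms(3) by simp
qed

end
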